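(* Let $\tilde f$ satisfy (H1), (H2) and (H3). For every real $M>0$ there exists $n_0\in\mathbb{N}$ such that for every compact set $\tilde K\subset\tilde A_0$ with $\mathrm{diam}\,p_1(\tilde K)\le M$ and every integer $n$ with $|n|\ge n_0$, we have $\tilde f^n(\tilde K)\cap\tilde K=\emptyset$.
   Context: Let $\tilde f$ be a homeomorphism of $\mathbb{R}^2$ isotopic to the identity and commuting with $T(x,y)=(x+1,y)$; $p_1$ is the first coordinate projection. For a horizontal line $\Gamma$, $U^+_\Gamma$ and $U^-_\Gamma$ denote the open half-planes above and below $\Gamma$. Hypotheses: (H1) $\Gamma_0,\Gamma_1,\Gamma_2$ are horizontal lines with $\Gamma_0\subset U^+_{\Gamma_1}$, $\Gamma_1\subset U^+_{\Gamma_2}$, and $\tilde f(\Gamma_j)\subset U^-_{\Gamma_j}$ for $j=0,1,2$; (H2) $\tilde f^n(\Gamma_0)\cap\Gamma_2\ne\emptyset$ for every integer $n\ge1$; (H3) for $i\in\{0,1\}$, letting $\tilde A_i$ be the closed band between $\Gamma_i$ and $\Gamma_{i+1}$, the sets $\Theta(\tilde A_0),\Theta(\tilde A_1)$ are non-empty and $\rho_{\Theta(\tilde A_0)}(\tilde f)\subset(0,+\infty)$, $\rho_{\Theta(\tilde A_1)}(\tilde f)\subset(-\infty,0)$. Here $\Theta(\tilde E)=\{x\in\tilde E:\tilde f^n(x)\in\tilde E\ \forall n\in\mathbb{Z}\}$, and for a closed $T$-invariant set $\tilde E$ contained in a horizontal band, $\rho_{\tilde E}(\tilde f)=\bigcap_{m\ge1}\mathrm{Cl}\big(\bigcup_{n\ge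 m}\{\frac1n(p_1(\tilde f^n(\tilde z))-p_1(\tilde z)): \tilde z\in\tilde E,\ \tilde f^n(\tilde z)\in\tilde E\}\big)$, closure in $\overline{\mathbb{R}}=\mathbb{R}\cup\{\pm\infty\}$. *)

theory Defs
  imports "HOL-Analysis.Analysis" "HOL-Library.Extended_Real"
begin

type_synonym pt = "real \<times> real"

definition isotopic_to_id :: "(pt \<Rightarrow> pt) \<Rightarrow> bool" where
  "isotopic_to_id f \<longleftrightarrow>
     (\<exists>H :: real \<times> pt \<Rightarrow> pt.
        continuous_on ({0..1} \<times> UNIV) H \<and>
        (\<forall>t\<in>{0..1}. \<exists>g. homeomorphism UNIV UNIV (\<lambda>z. H (t, z)) g) \<and>
        (\<forall>z. H (0, z) = z) \<and> (\<forall>z. H (1, z) = f z))"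

definition ipow :: "(pt \<Rightarrow> pt) \<Rightarrow> (pt \<Rightarrow> pt) \<Rightarrow> int \<Rightarrow> pt \<Rightarrow> pt" where
  "ipow f g n = (if 0 \<le> n then f ^^ nat n else g ^^ nat (- n))"

definition hline :: "real \<Rightarrow> pt set" where
  "hline c = {z. snd z = c}"

definition upper :: "real \<Rightarrow> pt set" where
  "upper c = {z. snd z > c}"

definition lower :: "real \<Rightarrow> pt set" where
  "lower c = {z. snd z < c}"

definition band :: "real \<Rightarrow> real \<Rightarrow> pt set" where
  "band a b = {z. min a b \<le> snd z \<and> snd z \<le> max a b}"

definition Theta :: "(pt \<Rightarrow> pt) \<Rightarrow> (pt \<Rightarrow> pt) \<Rightarrow> pt set \<Rightarrow> pt set" where
  "Theta f g E = {z \<in> E. \<forall>n::int. ipow f g n z \<in> E}"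

definition rot_set :: "(pt \<Rightarrow> pt) \<Rightarrow> (pt \<Rightarrow> pt) \<Rightarrow> pt set \<Rightarrow> ereal set" where
  "rot_set f g E = (\<Inter>m\<in>{1::nat..}. closure (\<Union>n\<in>{m..}.
      {ereal ((fst ((f ^^ n) z) - fst z) / real n) | z. z \<in> E \<and> (f ^^ n) z \<in> E}))"

end

theory Submission
  imports Defs
begin

text \<open>The lines of heights c0 and c1 are pushed down by f, and a connectedness argument shows
  that then f maps the closed half-plane below each of them strictly below it (for c1 the
  alternative is excluded by a point of Theta, for c0 by the boundedness of f on the band).
  Hence an orbit that leaves the band never comes back, and an orbit returning to the band
  after m steps stays in it all the time. Positivity of the rotation set of Theta gives N
  with drift at least 2 over N steps on Theta, and by compactness drift at least 1 for the
  middle points of sufficiently long orbit segments in the band. So the drift along an orbit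
  segment in the band grows linearly in its length, and for m large it exceeds M, the width
  of K; this excludes the returns of K to itself. Negative iterates are forward orbits read
  backwards.\<close>

definition hshift :: "real \<Rightarrow> pt \<Rightarrow> pt" where
  "hshift k z = (fst z + k, snd z)"

lemma hshift_hshift: "hshift a (hshift b z) = hshift (a + b) z"
  and hshift_0 [simp]: "hshift 0 z = z"
  and snd_hshift [simp]: "snd (hshift k z) = snd z"
  and fst_hshift [simp]: "fst (hshift k z) = fst z + k"
  by (auto simp: hshift_def)

lemma band_bounded_if_int_periodic:
  fixes h :: "pt \<Rightarrow> real"
  assumes cont: "continuous_on UNIV h" and periodic: "\<And>k z. h (hshift (of_int k) z) = h z"
  shows "\<exists>C. \<forall>z \<in> band a b. \<bar>h z\<bar> \<le> C"
proof -
  define S :: "pt set" where "S = {0..1} \<times> {min a b..max a b}"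
  have "compact (h ` S)"
    unfolding S_def using cont
    by (intro compact_continuous_image compact_Times) (auto intro: continuous_on_subset)
  then obtain C where C: "\<forall>x\<in>h ` S. \<bar>x\<bar> \<le> C"
    using compact_imp_bounded bounded_real by metis
  have "\<bar>h z\<bar> \<le> C" if z: "z \<in> band a b" for z
  proof -
    define k where "k = - \<lfloor>fst z\<rfloor>"
    have "hshift (of_int k) z \<in> S"
      using z unfolding S_def band_def k_def by (auto simp: mem_Times_iff) linarith
    then show ?thesis using C periodic[of k z] by (metis image_eqI)
  qed
  then show ?thesis by blast
qed

text \<open>The closed half-plane above c is connected and covered by the disjoint open images of the
  open half-planes below and above c, so it meets only one of them.\<close>
lemma homeomorphism_below_line_dichotomy:
  assumes hom: "homeomorphism UNIV UNIV f g" and down: "f ` hline c \<subseteq> lower c"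
  shows "(\<forall>z. snd z \<le> c \<longrightarrow> snd (f z) < c) \<or> (\<forall>u. c \<le> snd u \<longrightarrow> snd (g u) < c)"
proof -
  have gf: "g (f z) = z" and fg: "f (g z) = z" for z
    using homeomorphism_apply1[OF hom] homeomorphism_apply2[OF hom] by simp_all
  define U where "U = (UNIV :: real set) \<times> {c..}"
  have "connected U"
    unfolding U_def by (intro convex_connected convex_Times) auto
  have open_image: "open (f ` A)" if "open A" for A
    using homeomorphism_imp_open_map[OF hom, of A] that by (simp add: openin_open_eq)
  have "open (f ` lower c)" "open (f ` upper c)"
    by (auto intro!: open_image open_Collect_less continuous_intros simp: lower_def upper_def)
  moreover have "f ` lower c \<inter> f ` upper c = {}"
    by (auto simp: lower_def upper_def) (metis gf less_asym snd_conv)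
  moreover have cover: "U \<subseteq> f ` lower c \<union> f ` upper c"
  proof
    fix u assume u: "u \<in> U"
    have "snd (g u) \<noteq> c"
    proof
      assume "snd (g u) = c"
      then have "snd (f (g u)) < c" using down by (auto simp: hline_def lower_def)
      then show False using u fg by (simp add: U_def mem_Times_iff)
    qed
    then have "g u \<in> lower c \<or> g u \<in> upper c" by (auto simp: lower_def upper_def)
    then show "u \<in> f ` lower c \<union> f ` upper c" by (metis Un_iff fg image_eqI)
  qed
  ultimately have "f ` lower c \<inter> U = {} \<or> f ` upper c \<inter> U = {}"
    using connectedD[OF \<open>connected U\<close>] by blast
  then show ?thesis
  proof
    assume "f ` lower c \<inter> U = {}"
    then have "snd (f z) < c" if "snd z \<le> c" for z
    proof (cases "snd z = c")
      case False
      with that have "z \<in> lower c" by (simp add: lower_def)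
      with \<open>f ` lower c \<inter> U = {}\<close> show ?thesis by (force simp: U_def mem_Times_iff)
    qed (use down in \<open>auto simp: hline_def lower_def\<close>)
    then show ?thesis by blast
  next
    assume "f ` upper c \<inter> U = {}"
    then have "snd (g u) < c" if "c \<le> snd u" for u
    proof -
      have "u \<in> U" using that by (simp add: U_def mem_Times_iff)
      with cover \<open>f ` upper c \<inter> U = {}\<close> have "u \<in> f ` lower c" by blast
      then show ?thesis using gf by (auto simp: lower_def)
    qed
    then show ?thesis by blast
  qed
qed

lemma continuous_on_funpow:
  fixes f :: "'a::topological_space \<Rightarrow> 'a"
  assumes "continuous_on UNIV f"
  shows "continuous_on UNIV (f ^^ n)"
proof (induction n)
  case (Suc n)
  have "continuous_on UNIV (f \<circ> f ^^ n)"
    using Suc assms by (intro continuous_on_compose) (auto intro: continuous_on_subset)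
  then show ?case by simp
qed (simp add: id_def)

text \<open>If some orbit segments of every length N + 1 inside S had drift below a, their average
  drifts, at most max a 0 / (N + 1), would accumulate at a point of the rotation set that is not positive.\<close>
lemma rot_set_positive_imp_uniform_drift:
  assumes invariant: "\<And>w n. w \<in> S \<Longrightarrow> (f ^^ n) w \<in> S"
    and positive: "rot_set f g S \<subseteq> {0<..}"
  shows "\<exists>N\<ge>1. \<forall>w\<in>S. a \<le> fst ((f ^^ N) w) - fst w"
proof (rule ccontr)
  assume "\<not> ?thesis"
  then have "\<forall>N. \<exists>w. w \<in> S \<and> fst ((f ^^ Suc N) w) - fst w < a"
    by (metis One_nat_def Suc_le_mono le0 not_le)
  then obtain W where W: "\<And>N. W N \<in> S" "\<And>N. fst ((f ^^ Suc N) (W N)) - fst (W N) < a"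
    by metis
  define A where "A m = (\<Union>n\<in>{m..}.
      {ereal ((fst ((f ^^ n) z) - fst z) / real n) | z. z \<in> S \<and> (f ^^ n) z \<in> S})" for m :: nat
  define y where "y N = ereal ((fst ((f ^^ Suc N) (W N)) - fst (W N)) / real (Suc N))" for N
  have y_in_A: "y N \<in> A m" if "m \<le> Suc N" for m N
    using that W(1)[of N] invariant[of "W N" "Suc N"] unfolding A_def y_def by blast
  have y_le: "y N \<le> ereal (max a 0 * inverse (real (Suc N)))" for N
    using W(2)[of N] by (simp add: y_def divide_inverse mult_right_mono)
  obtain r where r: "strict_mono r" "(y \<circ> r) \<longlonglongrightarrow> limsup y"
    using limsup_subseq_lim by blast
  have "limsup y \<in> closure (A m)" for m
  proof (rule Lim_in_closed_set[OF closed_closure _ _ r(2)])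
    show "\<forall>\<^sub>F j in sequentially. (y \<circ> r) j \<in> closure (A m)"
      unfolding eventually_sequentially using seq_suble[OF r(1)] y_in_A closure_subset
      by (metis comp_apply le_SucI order_trans subsetD)
  qed simp
  then have "limsup y \<in> rot_set f g S"
    unfolding rot_set_def A_def by blast
  then have "0 < limsup y" using positive by auto
  moreover have "limsup y \<le> ereal (max a 0 * 0)"
  proof (rule tendsto_le[OF trivial_limit_sequentially _ r(2)])
    show "(\<lambda>j. ereal (max a 0 * inverse (real (Suc j)))) \<longlonglongrightarrow> ereal (max a 0 * 0)"
      by (intro tendsto_ereal tendsto_mult tendsto_const LIMSEQ_inverse_real_of_nat)
    show "\<forall>\<^sub>F j in sequentially. (y \<circ> r) j \<le> ereal (max a 0 * inverse (real (Suc j)))"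
    proof (rule always_eventually, rule allI)
      fix j
      have "y (r j) \<le> ereal (max a 0 * inverse (real (Suc (r j))))" by (rule y_le)
      also have "\<dots> \<le> ereal (max a 0 * inverse (real (Suc j)))"
        using seq_suble[OF r(1), of j] by (auto intro!: mult_left_mono le_imp_inverse_le)
      finally show "(y \<circ> r) j \<le> ereal (max a 0 * inverse (real (Suc j)))" by simp
    qed
  qed
  ultimately show False by (simp add: zero_ereal_def[symmetric])
qed

locale plane_lift =
  fixes f g :: "pt \<Rightarrow> pt"
  assumes homeo: "homeomorphism UNIV UNIV f g"
    and commute_T: "\<And>x y. f (x + 1, y) = (fst (f (x, y)) + 1, snd (f (x, y)))"
begin

lemma g_f [simp]: "g (f z) = z" and f_g [simp]: "f (g z) = z"
  using homeomorphism_apply1[OF homeo] homeomorphism_apply2[OF homeo] by simp_all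

lemma continuous_on_f: "continuous_on UNIV f" and continuous_on_g: "continuous_on UNIV g"
  using homeo by (simp_all add: homeomorphism_def)

lemma f_hshift_of_nat: "f (hshift (of_nat n) z) = hshift (of_nat n) (f z)"
proof (induction n arbitrary: z)
  case (Suc n)
  have "f (hshift (of_nat (Suc n)) z) = f (fst (hshift (of_nat n) z) + 1, snd z)"
    by (simp add: hshift_def ac_simps)
  also have "\<dots> = hshift 1 (f (hshift (of_nat n) z))"
    using commute_T[of "fst (hshift (of_nat n) z)" "snd z"] by (simp add: hshift_def)
  finally show ?case by (simp add: Suc hshift_hshift add.commute)
qed simp

lemma f_hshift: "f (hshift (of_int k) z) = hshift (of_int k) (f z)"
proof (cases "0 \<le> k")
  case True
  then show ?thesis using f_hshift_of_nat[of "nat k" z] by simp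
next
  case False
  then have k: "of_int k = - real (nat (- k))" by simp
  have "f z = f (hshift (real (nat (- k))) (hshift (of_int k) z))"
    by (simp add: hshift_hshift k)
  then have "f z = hshift (real (nat (- k))) (f (hshift (of_int k) z))"
    by (simp add: f_hshift_of_nat)
  then show ?thesis by (simp add: hshift_hshift k)
qed

lemma funpow_f_hshift: "(f ^^ n) (hshift (of_int k) z) = hshift (of_int k) ((f ^^ n) z)"
  by (induction n) (simp_all add: f_hshift)

lemma funpow_f_funpow_g: "(f ^^ n) ((g ^^ n) z) = z"
  by (induction n arbitrary: z) (simp_all add: funpow_swap1)

lemma continuous_on_ipow: "continuous_on UNIV (ipow f g n)"
  by (simp add: ipow_def continuous_on_funpow continuous_on_f continuous_on_g)

lemma ipow_of_nat [simp]: "ipow f g (int n) = f ^^ n"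
  by (simp add: ipow_def)

lemma ipow_add1: "ipow f g (i + 1) z = f (ipow f g i z)"
proof -
  consider "0 \<le> i" | "i = -1" | "i \<le> -2" by linarith
  then show ?thesis
  proof cases
    case 3
    then have "nat (- i) = Suc (nat (- (i + 1)))" by simp
    with 3 show ?thesis by (simp add: ipow_def)
  qed (simp_all add: ipow_def nat_add_distrib)
qed

lemma ipow_diff1: "ipow f g (i - 1) z = g (ipow f g i z)"
  by (metis ipow_add1 diff_add_cancel g_f)

lemma ipow_funpow: "ipow f g i ((f ^^ n) z) = ipow f g (i + int n) z"
proof (induction i rule: int_induct[where k = 0])
  case base
  then show ?case by (simp add: ipow_def)
next
  case (step1 i)
  then show ?case using ipow_add1[of i] ipow_add1[of "i + int n"] by (simp add: algebra_simps)
next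
  case (step2 i)
  then show ?case using ipow_diff1[of i] ipow_diff1[of "i + int n"] by (simp add: algebra_simps)
qed

lemma Theta_funpow_closed:
  assumes "w \<in> Theta f g E"
  shows "(f ^^ n) w \<in> Theta f g E"
proof -
  have "ipow f g i ((f ^^ n) w) \<in> E" for i
    using assms by (simp add: Theta_def ipow_funpow)
  moreover from this[of 0] have "(f ^^ n) w \<in> E" by (simp add: ipow_def)
  ultimately show ?thesis by (simp add: Theta_def)
qed

lemma ipow_as_funpow:
  "\<exists>a b. {a, b} = {z, ipow f g n z} \<and> (f ^^ nat \<bar>n\<bar>) a = b"
proof (cases "0 \<le> n")
  case True
  then show ?thesis by (intro exI[of _ z] exI[of _ "ipow f g n z"]) (simp add: ipow_def)
next
  case False
  then show ?thesis
    by (intro exI[of _ "ipow f g n z"] exI[of _ z]) (auto simp: ipow_def funpow_f_funpow_g)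
qed

definition drift :: "pt \<Rightarrow> nat \<Rightarrow> real" where
  "drift z n = fst ((f ^^ n) z) - fst z"

lemma drift_add: "drift z (m + n) = drift z m + drift ((f ^^ m) z) n"
  by (simp add: drift_def funpow_add add.commute[of m n])

lemma drift_hshift [simp]: "drift (hshift (of_int k) z) n = drift z n"
  by (simp add: drift_def funpow_f_hshift)

end

locale band_dynamics = plane_lift +
  fixes c0 c1 :: real
  assumes c1_less_c0: "c1 < c0"
    and f_top_line: "f ` hline c0 \<subseteq> lower c0"
    and f_bottom_line: "f ` hline c1 \<subseteq> lower c1"
    and Theta_nonempty: "Theta f g (band c0 c1) \<noteq> {}"
begin

lemma mem_band_iff: "z \<in> band c0 c1 \<longleftrightarrow> c1 \<le> snd z \<and> snd z \<le> c0"
  using c1_less_c0 by (auto simp: band_def)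

lemma closed_band: "closed (band c0 c1)"
  unfolding band_def by (intro closed_Collect_conj closed_Collect_le continuous_intros)

text \<open>The other alternative of the dichotomy would put g (f w) = w below the band for w in Theta.\<close>
lemma f_below_bottom_line: "snd z \<le> c1 \<Longrightarrow> snd (f z) < c1"
proof -
  obtain w where w: "w \<in> Theta f g (band c0 c1)" using Theta_nonempty by blast
  then have "w \<in> band c0 c1" "ipow f g 1 w \<in> band c0 c1" by (auto simp: Theta_def)
  then have "c1 \<le> snd (f w)" "c1 \<le> snd (g (f w))" by (auto simp: mem_band_iff ipow_def)
  then have "\<not> (\<forall>u. c1 \<le> snd u \<longrightarrow> snd (g u) < c1)" by (meson not_le)
  then show "snd z \<le> c1 \<Longrightarrow> snd (f z) < c1"
    using homeomorphism_below_line_dichotomy[OF homeo f_bottom_line] by blast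
qed

text \<open>The other alternative would give every point high above the band a preimage in the band,
  whereas f is bounded on the band by periodicity.\<close>
lemma f_below_top_line: "snd z \<le> c0 \<Longrightarrow> snd (f z) < c0"
proof -
  have "continuous_on UNIV (\<lambda>z. snd (f z))"
    using continuous_on_f by (intro continuous_intros)
  moreover have "snd (f (hshift (of_int k) z)) = snd (f z)" for k z
    by (simp add: f_hshift)
  ultimately obtain C where C: "\<forall>z \<in> band c0 c1. \<bar>snd (f z)\<bar> \<le> C"
    using band_bounded_if_int_periodic by blast
  have "\<not> (\<forall>u. c0 \<le> snd u \<longrightarrow> snd (g u) < c0)"
  proof
    assume up: "\<forall>u. c0 \<le> snd u \<longrightarrow> snd (g u) < c0"
    define u where "u = (0::real, max c0 (C + 1))"
    have "\<not> snd (g u) < c1"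
      using f_below_bottom_line[of "g u"] c1_less_c0 by (auto simp: u_def)
    then have "g u \<in> band c0 c1"
      using up[rule_format, of u] by (simp add: mem_band_iff u_def)
    then show False using C by (force simp: u_def)
  qed
  then show "snd z \<le> c0 \<Longrightarrow> snd (f z) < c0"
    using homeomorphism_below_line_dichotomy[OF homeo f_top_line] by blast
qed

lemma funpow_in_band_between:
  assumes "z \<in> band c0 c1" and "(f ^^ n) z \<in> band c0 c1" and "k \<le> n"
  shows "(f ^^ k) z \<in> band c0 c1"
proof -
  have below_top: "snd ((f ^^ j) z) \<le> c0" for j
    by (induction j) (use assms(1) in \<open>auto simp: mem_band_iff dest: f_below_top_line\<close>)
  have stays_below: "snd ((f ^^ (i + j)) z) < c1" if "snd ((f ^^ j) z) < c1" for i j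
    by (induction i) (use that in \<open>auto dest!: f_below_bottom_line[OF less_imp_le]\<close>)
  have "c1 \<le> snd ((f ^^ k) z)"
    using stays_below[of k "n - k"] assms(2,3) by (force simp: mem_band_iff)
  then show ?thesis using below_top by (simp add: mem_band_iff)
qed

lemma limit_of_segment_midpoints_in_Theta:
  assumes segments: "\<And>L. \<forall>k\<le>2*L. (f ^^ k) (V L) \<in> band c0 c1"
    and "strict_mono r" and lim: "(\<lambda>j. (f ^^ r j) (V (r j))) \<longlonglongrightarrow> l"
  shows "l \<in> Theta f g (band c0 c1)"
proof -
  have "ipow f g k l \<in> band c0 c1" for k
  proof (rule Lim_in_closed_set[OF closed_band])
    have "isCont (ipow f g k) l"
      by (rule continuous_on_interior[OF continuous_on_ipow]) simp
    then show "(\<lambda>j. ipow f g k ((f ^^ r j) (V (r j)))) \<longlonglongrightarrow> ipow f g k l"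
      using lim by (rule isCont_tendsto_compose)
    show "\<forall>\<^sub>F j in sequentially. ipow f g k ((f ^^ r j) (V (r j))) \<in> band c0 c1"
      unfolding eventually_sequentially
    proof (intro exI allI impI)
      fix j assume "nat \<bar>k\<bar> \<le> j"
      moreover have "j \<le> r j" using seq_suble[OF \<open>strict_mono r\<close>] by blast
      ultimately have "k + int (r j) = int (nat (k + int (r j)))" "nat (k + int (r j)) \<le> 2 * r j"
        by auto
      then have "ipow f g k ((f ^^ r j) (V (r j))) = (f ^^ nat (k + int (r j))) (V (r j))"
        by (metis ipow_funpow ipow_of_nat)
      then show "ipow f g k ((f ^^ r j) (V (r j))) \<in> band c0 c1"
        using segments[of "r j"] \<open>nat (k + int (r j)) \<le> 2 * r j\<close> by simp
    qed
  qed simp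
  moreover from this[of 0] have "l \<in> band c0 c1" by (simp add: ipow_def)
  ultimately show ?thesis by (simp add: Theta_def)
qed

text \<open>Otherwise the middle points of ever longer orbit segments in the band with small drift,
  shifted into the unit square of the band, accumulate at a point of Theta of small drift.\<close>
lemma drift_near_Theta:
  assumes Theta_drift: "\<forall>w\<in>Theta f g (band c0 c1). a \<le> drift w N" and "b < a"
  shows "\<exists>L. \<forall>v. (\<forall>k\<le>2*L. (f ^^ k) v \<in> band c0 c1) \<longrightarrow> b \<le> drift ((f ^^ L) v) N"
proof (rule ccontr)
  assume bad: "\<not> ?thesis"
  have "\<exists>v. (\<forall>k\<le>2*L. (f ^^ k) v \<in> band c0 c1) \<and> drift ((f ^^ L) v) N < b
          \<and> (f ^^ L) v \<in> {0..1} \<times> {c1..c0}" for L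
  proof -
    obtain v where v: "\<forall>k\<le>2*L. (f ^^ k) v \<in> band c0 c1" "drift ((f ^^ L) v) N < b"
      using bad by (meson not_le)
    define k where "k = - \<lfloor>fst ((f ^^ L) v)\<rfloor>"
    have "(f ^^ L) (hshift (of_int k) v) \<in> {0..1} \<times> {c1..c0}"
      using v(1) unfolding funpow_f_hshift by (auto simp: k_def mem_band_iff mem_Times_iff) linarith
    with v show ?thesis
      by (intro exI[of _ "hshift (of_int k) v"]) (simp add: funpow_f_hshift mem_band_iff)
  qed
  then obtain V where V: "\<And>L. \<forall>k\<le>2*L. (f ^^ k) (V L) \<in> band c0 c1"
    "\<And>L. drift ((f ^^ L) (V L)) N < b" "\<And>L. (f ^^ L) (V L) \<in> {0..1} \<times> {c1..c0}"
    by metis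
  have "compact ({0..1} \<times> {c1..c0} :: pt set)" by (intro compact_Times) auto
  then obtain l r where "l \<in> {0..1} \<times> {c1..c0}" "strict_mono r"
    and "((\<lambda>L. (f ^^ L) (V L)) \<circ> r) \<longlonglongrightarrow> l"
    using seq_compactE[OF compact_imp_seq_compact, of _ "\<lambda>L. (f ^^ L) (V L)"] V(3) by blast
  then have lim: "(\<lambda>j. (f ^^ r j) (V (r j))) \<longlonglongrightarrow> l" by (simp add: comp_def)
  have "l \<in> Theta f g (band c0 c1)"
    by (rule limit_of_segment_midpoints_in_Theta[OF V(1) \<open>strict_mono r\<close> lim])
  then have "a \<le> drift l N" using Theta_drift by blast
  have "isCont (\<lambda>z. drift z N) l"
    unfolding drift_def
    by (intro continuous_intros continuous_on_interior[OF continuous_on_funpow[OF continuous_on_f]]) auto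
  then have "(\<lambda>j. drift ((f ^^ r j) (V (r j))) N) \<longlonglongrightarrow> drift l N"
    using lim by (rule isCont_tendsto_compose)
  moreover have "\<forall>\<^sub>F j in sequentially. drift ((f ^^ r j) (V (r j))) N \<le> b"
    by (simp add: less_imp_le[OF V(2)])
  ultimately have "drift l N \<le> b" by (rule tendsto_upperbound) simp
  with \<open>a \<le> drift l N\<close> \<open>b < a\<close> show False by simp
qed

lemma drift_linear_bound:
  "\<exists>C\<ge>0. \<forall>j z. (\<forall>k<j. (f ^^ k) z \<in> band c0 c1) \<longrightarrow> \<bar>drift z j\<bar> \<le> real j * C"
proof -
  have "continuous_on UNIV (\<lambda>z. drift z 1)"
    unfolding drift_def using continuous_on_f by (simp add: continuous_intros)
  then obtain C where C: "\<forall>z \<in> band c0 c1. \<bar>drift z 1\<bar> \<le> C"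
    using band_bounded_if_int_periodic drift_hshift by meson
  have "\<bar>drift z j\<bar> \<le> real j * max C 0" if "\<forall>k<j. (f ^^ k) z \<in> band c0 c1" for j z
    using that
  proof (induction j)
    case (Suc j)
    have "(f ^^ j) z \<in> band c0 c1" using Suc.prems by simp
    then have "\<bar>drift ((f ^^ j) z) 1\<bar> \<le> max C 0" using C by fastforce
    with Suc show ?case using drift_add[of z j 1] by (simp add: algebra_simps)
  qed (simp add: drift_def)
  then show ?thesis by (intro exI[of _ "max C 0"]) auto
qed

lemma drift_ge_multiple:
  assumes step: "\<And>v. \<forall>k\<le>2*L. (f ^^ k) v \<in> band c0 c1 \<Longrightarrow> 1 \<le> drift ((f ^^ L) v) N"
  shows "\<forall>k\<le>2*L + q*N. (f ^^ k) z \<in> band c0 c1 \<Longrightarrow> real q \<le> drift ((f ^^ L) z) (q * N)"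
proof (induction q arbitrary: z)
  case (Suc q)
  have "(f ^^ k) ((f ^^ N) z) \<in> band c0 c1" if "k \<le> 2*L + q*N" for k
    using Suc.prems[rule_format, of "k + N"] that by (simp add: funpow_add)
  then have "\<forall>k\<le>2*L + q*N. (f ^^ k) ((f ^^ N) z) \<in> band c0 c1" by blast
  then have "real q \<le> drift ((f ^^ L) ((f ^^ N) z)) (q * N)" by (rule Suc.IH)
  moreover have "1 \<le> drift ((f ^^ L) z) N" using Suc.prems by (intro step) auto
  moreover have "(f ^^ N) ((f ^^ L) z) = (f ^^ L) ((f ^^ N) z)"
    by (metis funpow_add comp_apply add.commute)
  ultimately show ?case
    using drift_add[of "(f ^^ L) z" N "q * N"] by simp
qed (simp add: drift_def)

text \<open>Split a long segment as L + q N + (L + r): the q blocks of length N in the middle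
  drift by at least 1 each, and the two ends drift by a bounded amount.\<close>
lemma long_band_segment_drift:
  assumes rot: "rot_set f g (Theta f g (band c0 c1)) \<subseteq> {0<..}"
  shows "\<exists>n0. \<forall>m\<ge>n0. \<forall>z. (\<forall>k\<le>m. (f ^^ k) z \<in> band c0 c1) \<longrightarrow> M < drift z m"
proof -
  obtain N where N: "1 \<le> N" "\<forall>w\<in>Theta f g (band c0 c1). 2 \<le> drift w N"
    using rot_set_positive_imp_uniform_drift[OF Theta_funpow_closed rot, of 2]
    unfolding drift_def by blast
  obtain L where L: "\<And>v. \<forall>k\<le>2*L. (f ^^ k) v \<in> band c0 c1 \<Longrightarrow> 1 \<le> drift ((f ^^ L) v) N"
    using drift_near_Theta[OF N(2), of 1] by auto
  obtain C where C: "0 \<le> C" "\<And>j z. \<forall>k<j. (f ^^ k) z \<in> band c0 c1 \<Longrightarrow> \<bar>drift z j\<bar> \<le> real j * C"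
    using drift_linear_bound by blast
  define K where "K = nat \<lceil>M + real (2*L + N) * C\<rceil>"
  have "M < drift z m" if m: "2*L + N*(K + 2) \<le> m" and seg: "\<forall>k\<le>m. (f ^^ k) z \<in> band c0 c1"
    for m z
  proof -
    define q where "q = (m - 2*L) div N"
    define r where "r = (m - 2*L) mod N"
    have m_split: "m = L + q * N + (L + r)"
      using m div_mult_mod_eq[of "m - 2*L" N] unfolding q_def r_def by linarith
    have "r < N" using N(1) by (simp add: r_def)
    have "N * (K + 2) div N \<le> q"
      unfolding q_def using m by (intro div_le_mono) linarith
    then have "K + 2 \<le> q" using N(1) by simp
    have "drift z m = drift z L + drift ((f ^^ L) z) (q * N) + drift ((f ^^ (L + q * N)) z) (L + r)"
      using drift_add[of z L "q * N"] drift_add[of z "L + q * N" "L + r"] m_split by simp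
    moreover have "\<bar>drift z L\<bar> \<le> real L * C"
      using seg m_split by (intro C(2)) auto
    moreover have "real q \<le> drift ((f ^^ L) z) (q * N)"
      using seg m_split by (intro drift_ge_multiple L) auto
    moreover have "\<bar>drift ((f ^^ (L + q * N)) z) (L + r)\<bar> \<le> real (L + r) * C"
    proof (intro C(2) allI impI)
      fix k assume "k < L + r"
      then show "(f ^^ k) ((f ^^ (L + q * N)) z) \<in> band c0 c1"
        using seg[rule_format, of "k + (L + q * N)"] m_split by (simp add: funpow_add)
    qed
    moreover have "real (L + r) * C \<le> real (L + N) * C"
      using \<open>r < N\<close> C(1) by (intro mult_right_mono) auto
    moreover have "M + real (2*L + N) * C \<le> real K"
      unfolding K_def by linarith
    ultimately show ?thesis
      using \<open>K + 2 \<le> q\<close> by (simp add: algebra_simps)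
  qed
  then show ?thesis by blast
qed

lemma band_return_drift:
  assumes "rot_set f g (Theta f g (band c0 c1)) \<subseteq> {0<..}"
  shows "\<exists>n0. \<forall>m\<ge>n0. \<forall>z. z \<in> band c0 c1 \<longrightarrow> (f ^^ m) z \<in> band c0 c1 \<longrightarrow> M < drift z m"
  using long_band_segment_drift[OF assms, of M] funpow_in_band_between by blast

lemma ipow_image_disjoint:
  assumes "rot_set f g (Theta f g (band c0 c1)) \<subseteq> {0<..}"
  shows "\<exists>n0::nat. \<forall>K n. K \<subseteq> band c0 c1 \<and> bounded (fst ` K) \<and> diameter (fst ` K) \<le> M
           \<and> int n0 \<le> \<bar>n\<bar> \<longrightarrow> ipow f g n ` K \<inter> K = {}"
proof -
  obtain n0 where n0: "\<And>m z. n0 \<le> m \<Longrightarrow> z \<in> band c0 c1 \<Longrightarrow> (f ^^ m) z \<in> band c0 c1 \<Longrightarrow> M < drift z m"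
    using band_return_drift[OF assms, of M] by blast
  have "ipow f g n ` K \<inter> K = {}"
    if K: "K \<subseteq> band c0 c1" "bounded (fst ` K)" "diameter (fst ` K) \<le> M" and n: "int n0 \<le> \<bar>n\<bar>"
    for K n
  proof (rule ccontr)
    assume "ipow f g n ` K \<inter> K \<noteq> {}"
    then obtain z where "z \<in> K" "ipow f g n z \<in> K" by blast
    moreover obtain a b where "{a, b} = {z, ipow f g n z}" and ab: "(f ^^ nat \<bar>n\<bar>) a = b"
      using ipow_as_funpow by blast
    ultimately have "a \<in> K" "b \<in> K" by (auto simp: doubleton_eq_iff)
    then have "M < drift a (nat \<bar>n\<bar>)"
      using K(1) n ab by (intro n0) auto
    then have "M < fst b - fst a" using ab by (simp add: drift_def)
    moreover have "fst b - fst a \<le> diameter (fst ` K)"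
      using diameter_bounded_bound[OF K(2), of "fst b" "fst a"] \<open>a \<in> K\<close> \<open>b \<in> K\<close>
      by (simp add: dist_real_def)
    ultimately show False using K(3) by simp
  qed
  then show ?thesis by blast
qed

end

theorem lemma6p8:
  fixes f g :: "pt \<Rightarrow> pt" and c0 c1 c2 :: real
  assumes homeo: "homeomorphism UNIV UNIV f g"
    and iso: "isotopic_to_id f"
    and commT: "\<And>x y. f (x + 1, y) = (fst (f (x, y)) + 1, snd (f (x, y)))"
    and H1a: "hline c0 \<subseteq> upper c1" and H1b: "hline c1 \<subseteq> upper c2"
    and H1c: "\<And>j. j \<in> {c0, c1, c2} \<Longrightarrow> f ` hline j \<subseteq> lower j"
    and H2: "\<And>n::nat. n \<ge> 1 \<Longrightarrow> (f ^^ n) ` hline c0 \<inter> hline c2 \<noteq> {}"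
    and H3a: "Theta f g (band c0 c1) \<noteq> {}" and H3b: "Theta f g (band c1 c2) \<noteq> {}"
    and H3c: "rot_set f g (Theta f g (band c0 c1)) \<subseteq> {0<..<\<infinity>}"
    and H3d: "rot_set f g (Theta f g (band c1 c2)) \<subseteq> {-\<infinity><..<0}"
  shows "\<forall>M>0. \<exists>n0::nat. \<forall>K n. compact K \<and> K \<subseteq> band c0 c1 \<and> diameter (fst ` K) \<le> M
           \<and> \<bar>n::int\<bar> \<ge> int n0 \<longrightarrow> ipow f g n ` K \<inter> K = {}"
proof (intro allI impI)
  fix M :: real
  have "(0, c0) \<in> hline c0" by (simp add: hline_def)
  then have "c1 < c0" using H1a by (auto simp: upper_def)
  then interpret band_dynamics f g c0 c1
    using homeo commT H1c H3a by unfold_locales auto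
  have "rot_set f g (Theta f g (band c0 c1)) \<subseteq> {0<..}" using H3c by auto
  then obtain n0 :: nat where "\<forall>K n. K \<subseteq> band c0 c1 \<and> bounded (fst ` K) \<and> diameter (fst ` K) \<le> M
           \<and> int n0 \<le> \<bar>n\<bar> \<longrightarrow> ipow f g n ` K \<inter> K = {}"
    using ipow_image_disjoint by blast
  then show "\<exists>n0::nat. \<forall>K n. compact K \<and> K \<subseteq> band c0 c1 \<and> diameter (fst ` K) \<le> M
           \<and> \<bar>n::int\<bar> \<ge> int n0 \<longrightarrow> ipow f g n ` K \<inter> K = {}"
    by (blast intro: bounded_fst compact_imp_bounded)
qed

end
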